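(* Let $\mathbb{H}=\{z\in\mathbb{C}:\operatorname{Im}z>0\}$. For $z_1,z_2\in\mathbb{H}$ and $p\ge1$ let \[ U_p(z_1,z_2)=\frac{|z_1-z_2|}{\sqrt[p]{\alpha^p+\beta^p}},\quad \alpha=\sqrt{\operatorname{Im}(z_1)^2+c^2},\quad \beta=\sqrt{\operatorname{Im}(z_2)^2+c^2},\quad c=\frac{|\operatorname{Re}(z_1-z_2)|}{2}. \] Then $b_{\mathbb{H},p}(z_1,z_2)\ge U_p(z_1,z_2)$.
   Context: For $z_1,z_2\in\mathbb{H}$ and $p\ge1$, $b_{\mathbb{H},p}(z_1,z_2)=\sup_{t\in\mathbb{R}}\frac{|z_1-z_2|}{\sqrt[p]{|z_1-t|^p+|t-z_2|^p}}$. *)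

theory Defs
  imports "HOL-Analysis.Analysis"
begin

definition upper_half_plane :: "complex set" where
  "upper_half_plane = {z. Im z > 0}"

definition b_H :: "real \<Rightarrow> complex \<Rightarrow> complex \<Rightarrow> real" where
  "b_H p z1 z2 = (SUP t::real. cmod (z1 - z2) /
      ((cmod (z1 - of_real t) powr p + cmod (of_real t - z2) powr p) powr (1 / p)))"

definition U_p :: "real \<Rightarrow> complex \<Rightarrow> complex \<Rightarrow> real" where
  "U_p p z1 z2 =
     (let c = \<bar>Re (z1 - z2)\<bar> / 2;
          \<alpha> = sqrt ((Im z1)\<^sup>2 + c\<^sup>2);
          \<beta> = sqrt ((Im z2)\<^sup>2 + c\<^sup>2)
      in cmod (z1 - z2) / ((\<alpha> powr p + \<beta> powr p) powr (1 / p)))"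

end

theory Submission
  imports Defs
begin

text \<open>U_p is the quotient in the supremum defining b_H evaluated at the real point t = Re
  ((z1 + z2) / 2), where the two distances are exactly \<alpha> and \<beta>. The supremum is finite because
  each quotient is at most |z1 - z2| / Im z1: the p-sum of the two distances dominates
  |z1 - t| \<ge> Im z1.\<close>

lemma le_powr_sum_root:
  fixes a b p :: real
  assumes "0 \<le> a" "0 \<le> b" "p > 0"
  shows "a \<le> (a powr p + b powr p) powr (1 / p)"
proof -
  have "a = (a powr p) powr (1 / p)"
    using assms by (simp add: powr_powr)
  also have "\<dots> \<le> (a powr p + b powr p) powr (1 / p)"
    using assms by (intro powr_mono2) auto
  finally show ?thesis .
qed

lemma cmod_sub_real_midpoint:
  fixes z w :: complex
  defines "m \<equiv> (Re z + Re w) / 2"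
  shows "cmod (z - of_real m) = sqrt ((Im z)\<^sup>2 + (\<bar>Re (z - w)\<bar> / 2)\<^sup>2)"
    and "cmod (of_real m - w) = sqrt ((Im w)\<^sup>2 + (\<bar>Re (z - w)\<bar> / 2)\<^sup>2)"
  unfolding cmod_def m_def by (simp_all add: power2_eq_square field_simps)

lemma bdd_above_b_H_quotients:
  fixes z1 z2 :: complex and p :: real
  assumes "Im z1 > 0" "p > 0"
  shows "bdd_above (range (\<lambda>t::real. cmod (z1 - z2) /
      ((cmod (z1 - of_real t) powr p + cmod (of_real t - z2) powr p) powr (1 / p))))"
proof (rule bdd_aboveI2)
  fix t :: real
  let ?s = "(cmod (z1 - of_real t) powr p + cmod (of_real t - z2) powr p) powr (1 / p)"
  have "Im z1 \<le> cmod (z1 - of_real t)"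
    using abs_Im_le_cmod[of "z1 - of_real t"] by simp
  also have "\<dots> \<le> ?s"
    using assms by (intro le_powr_sum_root) auto
  finally have "Im z1 \<le> ?s" .
  moreover have "0 < ?s * Im z1"
    using \<open>Im z1 \<le> ?s\<close> assms by (intro mult_pos_pos) auto
  ultimately show "cmod (z1 - z2) / ?s \<le> cmod (z1 - z2) / Im z1"
    by (intro divide_left_mono) auto
qed

theorem theorem3p23:
  fixes z1 z2 :: complex and p :: real
  assumes "z1 \<in> upper_half_plane" and "z2 \<in> upper_half_plane" and "p \<ge> 1"
  shows "b_H p z1 z2 \<ge> U_p p z1 z2"
proof -
  define f where "f t = cmod (z1 - z2) /
      ((cmod (z1 - of_real t) powr p + cmod (of_real t - z2) powr p) powr (1 / p))" for t :: real
  have "U_p p z1 z2 = f ((Re z1 + Re z2) / 2)"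
    unfolding U_p_def Let_def f_def cmod_sub_real_midpoint ..
  also have "\<dots> \<le> (SUP t. f t)"
  proof (rule cSUP_upper)
    show "bdd_above (range f)"
      unfolding f_def using assms
      by (intro bdd_above_b_H_quotients) (auto simp: upper_half_plane_def)
  qed simp
  also have "\<dots> = b_H p z1 z2"
    unfolding b_H_def f_def ..
  finally show ?thesis .
qed

end
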